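(* Let $P$ be a three-dimensional zonotope which is not a prism, and let $E$ be an edge of $P$ with $\#B(E)=8$. Then there exists an edge $M$ of $P$ not parallel to $E$ with $\#B(M)\ge 8$.
   Context: A zonotope is a Minkowski sum of finitely many segments. For an edge $E$ of a three-dimensional zonotope $P$, the belt $B(E)$ is the set of facets of $P$ containing a translate of $E$ as an edge, and $\#B(E)$ is the number of facets in it. A prism (cylinder) is a set $Q+S$ with $Q$ a convex polygon and $S$ a segment not parallel to the plane of $Q$. *)

theory Defs
  imports "HOL-Analysis.Analysis"
begin

fun msum_list :: "'a::real_vector set list \<Rightarrow> 'a set" where
  "msum_list [] = {0}"
| "msum_list (S # Ss) = {x + y | x y. x \<in> S \<and> y \<in> msum_list Ss}"

definition zonotope :: "'a::euclidean_space set \<Rightarrow> bool" where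
  "zonotope P \<longleftrightarrow> (\<exists>segs. P = msum_list (map (\<lambda>(a, b). closed_segment a b) segs))"

definition direction :: "'a::euclidean_space set \<Rightarrow> 'a set" where
  "direction S = span {x - y | x y. x \<in> S \<and> y \<in> S}"

definition belt :: "'a::euclidean_space set \<Rightarrow> 'a set \<Rightarrow> 'a set set" where
  "belt P E = {F. F facet_of P \<and> (\<exists>t. ((\<lambda>x. t + x) ` E) edge_of F)}"

definition prism :: "'a::euclidean_space set \<Rightarrow> bool" where
  "prism P \<longleftrightarrow> (\<exists>Q a b. polytope Q \<and> aff_dim Q = 2 \<and> a \<noteq> b \<and>
      b - a \<notin> direction Q \<and>
      P = {x + y | x y. x \<in> Q \<and> y \<in> closed_segment a b})"

end

theory Submission
  imports Defs "HOL-Analysis.Cross3"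
begin

text \<open>
  Write P as a Minkowski sum of segments, whose difference vectors we call generators. Every
  face of P maximizes a linear functional c and is, up to translation, the sum of the segments
  orthogonal to c. Hence the facets containing a translate of an edge parallel to a generator e
  are exactly the two facets parallel to each plane spanned by e and another generator, and
  #B(E) = 8 says that e lies on four such planes.

  Choose generators x1, ..., x4 on four distinct planes through e. The planes spanned by x1 and
  e, x2, x3, x4 are four distinct planes through x1 unless three of the xi span a plane T not
  containing e. As P is not a prism, some generator u lies neither in T nor on the line of e,
  and a case analysis on the plane spanned by e and u finds a generator other than e on four
  planes. Edges parallel to it have belts of size at least 8.
\<close>

lemma msum_list_eq_sum_list: "msum_list Ss = sum_list Ss"
  by (induction Ss) (auto simp: set_plus_def)

lemma sum_list_set_nonempty:
  "(\<And>S. S \<in> set Ss \<Longrightarrow> S \<noteq> {}) \<Longrightarrow> sum_list Ss \<noteq> ({}::'a::comm_monoid_add set)"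
proof (induction Ss)
  case (Cons S Ss)
  then obtain x y where "x \<in> S" "y \<in> sum_list Ss" by fastforce
  then show ?case by (auto simp: set_plus_def)
qed auto

definition maximizers :: "'a::real_inner \<Rightarrow> 'a set \<Rightarrow> 'a set" where
  "maximizers c S = {x\<in>S. \<forall>y\<in>S. c \<bullet> y \<le> c \<bullet> x}"

lemma maximizers_0 [simp]: "maximizers 0 S = S"
  by (simp add: maximizers_def)

lemma maximizers_scaleR: "0 < k \<Longrightarrow> maximizers (k *\<^sub>R c) S = maximizers c S"
  by (auto simp: maximizers_def)

lemma maximizers_set_plus:
  assumes "maximizers c A \<noteq> {}" "maximizers c B \<noteq> {}"
  shows "maximizers c (A + B) = maximizers c A + maximizers c B"
proof
  obtain a0 b0 where a0: "a0 \<in> maximizers c A" and b0: "b0 \<in> maximizers c B"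
    using assms by blast
  show "maximizers c (A + B) \<subseteq> maximizers c A + maximizers c B"
  proof
    fix x assume x: "x \<in> maximizers c (A + B)"
    then obtain a b where ab: "a \<in> A" "b \<in> B" "x = a + b"
      unfolding maximizers_def set_plus_def by auto
    have "a0 + b \<in> A + B" "a + b0 \<in> A + B" using a0 b0 ab by (auto simp: maximizers_def)
    then have "c \<bullet> (a0 + b) \<le> c \<bullet> x" "c \<bullet> (a + b0) \<le> c \<bullet> x"
      using x by (auto simp: maximizers_def)
    then have "c \<bullet> a0 \<le> c \<bullet> a" "c \<bullet> b0 \<le> c \<bullet> b" using ab by (auto simp: inner_add_right)
    then have "a \<in> maximizers c A" "b \<in> maximizers c B"
      using a0 b0 ab by (auto simp: maximizers_def)
    then show "x \<in> maximizers c A + maximizers c B" using ab by auto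
  qed
  show "maximizers c A + maximizers c B \<subseteq> maximizers c (A + B)"
    by (auto simp: maximizers_def set_plus_def inner_add_right intro!: add_mono)
qed

lemma maximizers_closed_segment:
  "maximizers c (closed_segment a b) =
     (if c \<bullet> a = c \<bullet> b then closed_segment a b else if c \<bullet> b < c \<bullet> a then {a} else {b})"
proof -
  have inner_segment: "c \<bullet> ((1 - u) *\<^sub>R a + u *\<^sub>R b) = c \<bullet> a + u * (c \<bullet> b - c \<bullet> a)" for a u b
    by (simp add: inner_add_right algebra_simps)
  have endpoint: "maximizers c (closed_segment a b) = {a}" if lt: "c \<bullet> b < c \<bullet> a" for a b
  proof -
    have below: "c \<bullet> y \<le> c \<bullet> a" and
      strictly_below: "y \<noteq> a \<Longrightarrow> c \<bullet> y < c \<bullet> a" if y: "y \<in> closed_segment a b" for y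
    proof -
      obtain u where u: "0 \<le> u" "u \<le> 1" "y = (1 - u) *\<^sub>R a + u *\<^sub>R b"
        using y by (auto simp: in_segment)
      then have cy: "c \<bullet> y = c \<bullet> a + u * (c \<bullet> b - c \<bullet> a)"
        using inner_segment by simp
      have "u * (c \<bullet> b - c \<bullet> a) \<le> 0"
        using u(1) lt by (simp add: mult_nonneg_nonpos)
      then show "c \<bullet> y \<le> c \<bullet> a" using cy by linarith
      show "c \<bullet> y < c \<bullet> a" if "y \<noteq> a"
      proof -
        have "0 < u" using that u by (cases "u = 0") auto
        then have "u * (c \<bullet> b - c \<bullet> a) < 0" using lt by (simp add: mult_pos_neg)
        then show ?thesis using cy by linarith
      qed
    qed
    have "a \<in> maximizers c (closed_segment a b)"
      unfolding maximizers_def using below by blast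
    moreover have "x = a" if x: "x \<in> maximizers c (closed_segment a b)" for x
    proof -
      have "x \<in> closed_segment a b" "c \<bullet> a \<le> c \<bullet> x"
        using x by (auto simp: maximizers_def)
      then show "x = a" using strictly_below[of x] by (meson not_less)
    qed
    ultimately show ?thesis by blast
  qed
  show ?thesis
  proof (cases "c \<bullet> a = c \<bullet> b")
    case True
    then show ?thesis by (auto simp: maximizers_def closed_segment_def inner_segment)
  next
    case False
    then show ?thesis
      using endpoint[of b a] endpoint[of a b] by (auto simp: closed_segment_commute)
  qed
qed

lemma maximizers_closed_segment_nonempty: "maximizers c (closed_segment a b) \<noteq> {}"
  by (simp add: maximizers_closed_segment)

lemma span_UN_span: "span (\<Union>i\<in>I. span (S i)) = span (\<Union>i\<in>I. S i)"
proof -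
  have "(\<Union>i\<in>I. span (S i)) \<subseteq> span (\<Union>i\<in>I. S i)"
    by (intro UN_least span_mono) auto
  moreover have "(\<Union>i\<in>I. S i) \<subseteq> span (\<Union>i\<in>I. span (S i))"
  proof -
    have "(\<Union>i\<in>I. S i) \<subseteq> (\<Union>i\<in>I. span (S i))" by (intro UN_mono) (auto intro: span_base)
    also have "\<dots> \<subseteq> span (\<Union>i\<in>I. span (S i))" by (rule span_superset)
    finally show ?thesis .
  qed
  ultimately show ?thesis unfolding span_eq by simp
qed

lemma span_Un_span: "span (span A \<union> span B) = span (A \<union> B)"
proof -
  have "span A \<union> span B \<subseteq> span (A \<union> B)" by (simp add: span_mono)
  moreover have "A \<union> B \<subseteq> span (span A \<union> span B)"
  proof -
    have "A \<union> B \<subseteq> span A \<union> span B" by (auto intro: span_base)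
    also have "\<dots> \<subseteq> span (span A \<union> span B)" by (rule span_superset)
    finally show ?thesis .
  qed
  ultimately show ?thesis unfolding span_eq by simp
qed

lemma direction_mono: "S \<subseteq> T \<Longrightarrow> direction S \<subseteq> direction T"
  unfolding direction_def by (rule span_mono) blast

lemma direction_translation: "direction ((\<lambda>x. t + x) ` S) = direction S"
proof -
  have "{x - y |x y. x \<in> (\<lambda>x. t + x) ` S \<and> y \<in> (\<lambda>x. t + x) ` S} = {x - y |x y. x \<in> S \<and> y \<in> S}"
  proof (intro set_eqI iffI)
    fix z assume "z \<in> {x - y |x y. x \<in> S \<and> y \<in> S}"
    then obtain x y where "x \<in> S" "y \<in> S" "z = (t + x) - (t + y)" by auto
    then show "z \<in> {x - y |x y. x \<in> (\<lambda>x. t + x) ` S \<and> y \<in> (\<lambda>x. t + x) ` S}" by blast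
  qed force
  then show ?thesis by (simp add: direction_def)
qed

lemma direction_singleton [simp]: "direction {a} = {0}"
  by (simp add: direction_def)

lemma direction_closed_segment: "direction (closed_segment a b) = span {b - a}"
proof -
  have "{x - y |x y. x \<in> closed_segment a b \<and> y \<in> closed_segment a b} \<subseteq> span {b - a}"
  proof
    fix z assume "z \<in> {x - y |x y. x \<in> closed_segment a b \<and> y \<in> closed_segment a b}"
    then obtain u v where "z = ((1 - u) *\<^sub>R a + u *\<^sub>R b) - ((1 - v) *\<^sub>R a + v *\<^sub>R b)"
      unfolding closed_segment_def by auto
    then have "z = (u - v) *\<^sub>R (b - a)" by (simp add: algebra_simps)
    then show "z \<in> span {b - a}" by (simp add: span_base span_scale)
  qed
  moreover have "b - a \<in> {x - y |x y. x \<in> closed_segment a b \<and> y \<in> closed_segment a b}"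
    by blast
  ultimately show ?thesis
    unfolding direction_def span_eq by (auto intro: span_base)
qed

lemma direction_set_plus:
  fixes A B :: "'a::euclidean_space set"
  assumes "A \<noteq> {}" "B \<noteq> {}"
  shows "direction (A + B) = span (direction A \<union> direction B)"
proof -
  obtain a0 where a0: "a0 \<in> A" using assms by auto
  obtain b0 where b0: "b0 \<in> B" using assms by auto
  let ?X = "{x - y |x y. x \<in> A + B \<and> y \<in> A + B}"
  let ?DA = "{x - y |x y. x \<in> A \<and> y \<in> A}"
  let ?DB = "{x - y |x y. x \<in> B \<and> y \<in> B}"
  have "span ?X = span (?DA \<union> ?DB)"
    unfolding span_eq
  proof
    show "?X \<subseteq> span (?DA \<union> ?DB)"
    proof
      fix z assume "z \<in> ?X"
      then obtain a b a' b' where z: "a \<in> A" "b \<in> B" "a' \<in> A" "b' \<in> B" "z = (a + b) - (a' + b')"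
        by (auto simp: set_plus_def)
      then have "z = (a - a') + (b - b')" by (simp add: algebra_simps)
      moreover have "a - a' \<in> span (?DA \<union> ?DB)" using z by (intro span_base) blast
      moreover have "b - b' \<in> span (?DA \<union> ?DB)" using z by (intro span_base) blast
      ultimately show "z \<in> span (?DA \<union> ?DB)" by (simp add: span_add)
    qed
    show "?DA \<union> ?DB \<subseteq> span ?X"
    proof
      fix z assume "z \<in> ?DA \<union> ?DB"
      then have "z \<in> ?X"
      proof
        assume "z \<in> ?DA"
        then obtain a a' where "a \<in> A" "a' \<in> A" "z = a - a'" by auto
        then have "z = (a + b0) - (a' + b0)" "a + b0 \<in> A + B" "a' + b0 \<in> A + B" using b0 by auto
        then show ?thesis by blast
      next
        assume "z \<in> ?DB"
        then obtain b b' where "b \<in> B" "b' \<in> B" "z = b - b'" by auto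
        then have "z = (a0 + b) - (a0 + b')" "a0 + b \<in> A + B" "a0 + b' \<in> A + B" using a0 by auto
        then show ?thesis by blast
      qed
      then show "z \<in> span ?X" by (rule span_base)
    qed
  qed
  moreover have "span (direction A \<union> direction B) = span (?DA \<union> ?DB)"
    unfolding direction_def by (rule span_Un_span)
  ultimately show ?thesis by (simp add: direction_def)
qed

lemma direction_sum_list:
  fixes Ss :: "'a::euclidean_space set list"
  assumes "\<And>S. S \<in> set Ss \<Longrightarrow> S \<noteq> {}"
  shows "direction (sum_list Ss) = span (\<Union>S\<in>set Ss. direction S)"
  using assms
proof (induction Ss)
  case (Cons S Ss)
  have "direction (sum_list (S # Ss)) = direction (S + sum_list Ss)" by simp
  also have "\<dots> = span (direction S \<union> direction (sum_list Ss))"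
    by (rule direction_set_plus) (use Cons.prems in \<open>auto intro!: sum_list_set_nonempty\<close>)
  also have "direction (sum_list Ss) = span (\<Union>S\<in>set Ss. direction S)"
    using Cons.prems by (intro Cons.IH) simp
  also have "direction S = span (direction S)"
    by (simp add: direction_def span_span)
  finally show ?case by (simp add: span_Un_span)
qed simp

lemma aff_dim_eq_dim_direction:
  fixes S :: "'a::euclidean_space set"
  assumes "S \<noteq> {}"
  shows "aff_dim S = int (dim (direction S))"
proof -
  obtain a where a: "a \<in> S" using assms by auto
  have "span ((+) (- a) ` S) = direction S"
    unfolding direction_def span_eq
  proof
    show "(+) (- a) ` S \<subseteq> span {x - y |x y. x \<in> S \<and> y \<in> S}"
      using a by (auto intro!: span_base)
    show "{x - y |x y. x \<in> S \<and> y \<in> S} \<subseteq> span ((+) (- a) ` S)"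
    proof
      fix z assume "z \<in> {x - y |x y. x \<in> S \<and> y \<in> S}"
      then obtain x y where "x \<in> S" "y \<in> S" "z = (- a + x) - (- a + y)" by auto
      then show "z \<in> span ((+) (- a) ` S)"
        by (metis image_eqI span_base span_diff)
    qed
  qed
  moreover have "aff_dim S = int (dim ((+) (- a) ` S))"
    by (rule aff_dim_eq_dim) (simp add: a hull_inc)
  ultimately show ?thesis by (metis dim_span)
qed

definition zonotope_of :: "('a::euclidean_space \<times> 'a) list \<Rightarrow> 'a set" where
  "zonotope_of segs = sum_list (map (\<lambda>(a, b). closed_segment a b) segs)"

definition generators :: "('a::euclidean_space \<times> 'a) list \<Rightarrow> 'a set" where
  "generators segs = (\<lambda>(a, b). b - a) ` set segs"

definition generators_perp :: "'a \<Rightarrow> ('a::euclidean_space \<times> 'a) list \<Rightarrow> 'a set" where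
  "generators_perp c segs = {g \<in> generators segs. c \<bullet> g = 0}"

lemma zonotope_iff_zonotope_of: "zonotope P \<longleftrightarrow> (\<exists>segs. P = zonotope_of segs)"
  by (simp add: zonotope_def zonotope_of_def msum_list_eq_sum_list)

lemma finite_generators: "finite (generators segs)"
  by (simp add: generators_def)

lemma generators_Cons [simp]: "generators ((a, b) # segs) = insert (b - a) (generators segs)"
  by (simp add: generators_def)

lemma zonotope_of_Cons [simp]:
  "zonotope_of ((a, b) # segs) = closed_segment a b + zonotope_of segs"
  by (simp add: zonotope_of_def)

lemma zonotope_of_nonempty: "zonotope_of segs \<noteq> {}"
  unfolding zonotope_of_def by (rule sum_list_set_nonempty) auto

lemma maximizers_zonotope_of:
  "maximizers c (zonotope_of segs) = sum_list (map (\<lambda>(a, b). maximizers c (closed_segment a b)) segs)"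
proof (induction segs)
  case Nil
  then show ?case by (auto simp: zonotope_of_def maximizers_def)
next
  case (Cons ab segs)
  obtain a b where [simp]: "ab = (a, b)" by fastforce
  have "sum_list (map (\<lambda>(a, b). maximizers c (closed_segment a b)) segs) \<noteq> {}"
    by (rule sum_list_set_nonempty) (auto simp: maximizers_closed_segment_nonempty)
  then show ?case
    using Cons by (simp add: maximizers_set_plus maximizers_closed_segment_nonempty)
qed

lemma maximizers_zonotope_of_nonempty: "maximizers c (zonotope_of segs) \<noteq> {}"
  unfolding maximizers_zonotope_of
  by (rule sum_list_set_nonempty) (auto simp: maximizers_closed_segment_nonempty)

lemma direction_maximizers_closed_segment:
  "direction (maximizers c (closed_segment a b)) = (if c \<bullet> (b - a) = 0 then span {b - a} else {0})"
  by (auto simp: maximizers_closed_segment direction_closed_segment inner_diff_right)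

lemma direction_maximizers_zonotope_of:
  "direction (maximizers c (zonotope_of segs)) = span (generators_perp c segs)"
proof -
  let ?perp = "\<lambda>ab. if c \<bullet> (snd ab - fst ab) = 0 then {snd ab - fst ab} else {}"
  have "direction (maximizers c (zonotope_of segs)) =
      span (\<Union>ab\<in>set segs. direction (maximizers c (closed_segment (fst ab) (snd ab))))"
    unfolding maximizers_zonotope_of
    by (subst direction_sum_list)
      (auto simp: maximizers_closed_segment_nonempty image_image case_prod_beta)
  also have "\<dots> = span (\<Union>ab\<in>set segs. span (?perp ab))"
    unfolding direction_maximizers_closed_segment by (intro arg_cong[where f=span] SUP_cong) auto
  also have "\<dots> = span (\<Union>ab\<in>set segs. ?perp ab)"
    by (rule span_UN_span)
  also have "(\<Union>ab\<in>set segs. ?perp ab) = generators_perp c segs"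
    unfolding generators_perp_def generators_def by (auto split: if_splits)
  finally show ?thesis .
qed

lemma direction_zonotope_of: "direction (zonotope_of segs) = span (generators segs)"
  using direction_maximizers_zonotope_of[of 0 segs] by (simp add: generators_perp_def)

lemma aff_dim_zonotope_of: "aff_dim (zonotope_of segs) = int (dim (generators segs))"
  by (simp add: aff_dim_eq_dim_direction zonotope_of_nonempty direction_zonotope_of)

lemma aff_dim_maximizers_zonotope_of:
  "aff_dim (maximizers c (zonotope_of segs)) = int (dim (generators_perp c segs))"
  by (simp add: aff_dim_eq_dim_direction maximizers_zonotope_of_nonempty
      direction_maximizers_zonotope_of)

lemma zonotope_of_eq_convex_hull:
  "zonotope_of segs = convex hull (sum_list (map (\<lambda>(a, b). {a, b}) segs))"
proof (induction segs)
  case Nil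
  then show ?case by (simp add: zonotope_of_def)
next
  case (Cons ab segs)
  then show ?case
    by (cases ab) (simp add: convex_hull_set_plus segment_convex_hull)
qed

lemma polytope_zonotope_of: "polytope (zonotope_of segs)"
proof -
  have "finite (sum_list (map (\<lambda>(a, b). {a, b}) segs) :: 'a set)"
    by (induction segs) (auto simp: finite_set_plus)
  then show ?thesis unfolding polytope_def zonotope_of_eq_convex_hull by blast
qed

lemma maximizers_face_of_zonotope_of: "maximizers c (zonotope_of segs) face_of zonotope_of segs"
proof -
  obtain x0 where x0: "x0 \<in> maximizers c (zonotope_of segs)"
    using maximizers_zonotope_of_nonempty by blast
  have "maximizers c (zonotope_of segs) = zonotope_of segs \<inter> {x. c \<bullet> x = c \<bullet> x0}"
    using x0 unfolding maximizers_def by (auto intro: order_antisym)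
  moreover have "zonotope_of segs \<inter> {x. c \<bullet> x = c \<bullet> x0} face_of zonotope_of segs"
    by (rule face_of_Int_supporting_hyperplane_le)
      (use x0 polytope_zonotope_of polytope_imp_convex in \<open>auto simp: maximizers_def\<close>)
  ultimately show ?thesis by simp
qed

lemma face_of_zonotope_of_eq_maximizers:
  assumes "F face_of zonotope_of segs" "F \<noteq> {}"
  obtains c where "F = maximizers c (zonotope_of segs)"
proof -
  have "F exposed_face_of zonotope_of segs"
    using assms polytope_zonotope_of polytope_imp_polyhedron exposed_face_of_polyhedron by blast
  then obtain a b where ab: "zonotope_of segs \<subseteq> {x. a \<bullet> x \<le> b}"
    "F = zonotope_of segs \<inter> {x. a \<bullet> x = b}"
    unfolding exposed_face_of_def by blast
  obtain f where "f \<in> F" using assms by auto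
  then have "F = maximizers a (zonotope_of segs)"
    using ab unfolding maximizers_def by (auto intro: order_antisym)
  then show ?thesis by (rule that)
qed

lemma translation_set_plus:
  fixes A B :: "'a::ab_group_add set"
  shows "(\<lambda>x. s + x) ` A + (\<lambda>x. t + x) ` B = (\<lambda>x. (s + t) + x) ` (A + B)"
  unfolding set_plus_def by (auto simp: image_iff algebra_simps) (metis add.assoc add.left_commute)+

text \<open>Each segment contributes to a maximizer face either itself or a single endpoint.\<close>

lemma maximizers_zonotope_of_translation:
  assumes "\<And>g. g \<in> generators segs \<Longrightarrow> c1 \<bullet> g = 0 \<longleftrightarrow> c2 \<bullet> g = 0"
  obtains t where "maximizers c1 (zonotope_of segs) = (\<lambda>x. t + x) ` maximizers c2 (zonotope_of segs)"
proof -
  have "\<exists>t. maximizers c1 (zonotope_of segs) = (\<lambda>x. t + x) ` maximizers c2 (zonotope_of segs)"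
    using assms unfolding maximizers_zonotope_of
  proof (induction segs)
    case Nil
    then show ?case by (intro exI[of _ 0]) auto
  next
    case (Cons ab segs)
    obtain a b where ab: "ab = (a, b)" by fastforce
    obtain t where t: "sum_list (map (\<lambda>(a, b). maximizers c1 (closed_segment a b)) segs) =
        (\<lambda>x. t + x) ` sum_list (map (\<lambda>(a, b). maximizers c2 (closed_segment a b)) segs)"
      using Cons by (auto simp: generators_def)
    have same_perp: "c1 \<bullet> a = c1 \<bullet> b \<longleftrightarrow> c2 \<bullet> a = c2 \<bullet> b"
      using Cons.prems[of "b - a"] ab by (auto simp: inner_diff_right)
    obtain s where s: "maximizers c1 (closed_segment a b) = (\<lambda>x. s + x) ` maximizers c2 (closed_segment a b)"
    proof (cases "c2 \<bullet> a = c2 \<bullet> b")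
      case True
      then show ?thesis using same_perp that[of 0] by (simp add: maximizers_closed_segment)
    next
      case False
      let ?end = "\<lambda>c. if c \<bullet> b < c \<bullet> a then a else b"
      show ?thesis
        using False same_perp that[of "?end c1 - ?end c2"] by (auto simp: maximizers_closed_segment)
    qed
    show ?case using s t ab by (auto simp: translation_set_plus)
  qed
  then show ?thesis using that by blast
qed

lemma maximizers_zonotope_of_mono:
  assumes "\<And>g. g \<in> generators segs \<Longrightarrow> c2 \<bullet> g \<noteq> 0 \<Longrightarrow> c1 \<bullet> g \<noteq> 0 \<and> (c1 \<bullet> g < 0 \<longleftrightarrow> c2 \<bullet> g < 0)"
  shows "maximizers c1 (zonotope_of segs) \<subseteq> maximizers c2 (zonotope_of segs)"
  using assms unfolding maximizers_zonotope_of
proof (induction segs)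
  case (Cons ab segs)
  obtain a b where ab: "ab = (a, b)" by fastforce
  have "maximizers c1 (closed_segment a b) \<subseteq> maximizers c2 (closed_segment a b)"
    using Cons.prems[of "b - a"] ab
    by (auto simp: maximizers_closed_segment inner_diff_right generators_def)
  moreover have "sum_list (map (\<lambda>(a, b). maximizers c1 (closed_segment a b)) segs) \<subseteq>
      sum_list (map (\<lambda>(a, b). maximizers c2 (closed_segment a b)) segs)"
    using Cons by (auto simp: generators_def)
  ultimately show ?case using ab by (simp add: set_plus_mono2)
qed simp

definition nonparallel :: "'a::euclidean_space \<Rightarrow> 'a \<Rightarrow> bool" where
  "nonparallel e g \<longleftrightarrow> e \<noteq> 0 \<and> g \<notin> span {e}"

lemma in_span_singleton_iff: "x \<in> span {e} \<longleftrightarrow> (\<exists>k. x = k *\<^sub>R e)"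
  by (auto simp: span_singleton)

lemma nonparallel_nonzero: "nonparallel e g \<Longrightarrow> e \<noteq> 0" "nonparallel e g \<Longrightarrow> g \<noteq> 0"
  by (auto simp: nonparallel_def span_zero)

lemma nonparallel_sym:
  assumes "nonparallel e g"
  shows "nonparallel g e"
proof -
  have "e \<notin> span {g}"
  proof
    assume "e \<in> span {g}"
    then obtain k where k: "e = k *\<^sub>R g" by (auto simp: in_span_singleton_iff)
    then have "k \<noteq> 0" using assms by (auto simp: nonparallel_def)
    then have "g = (1/k) *\<^sub>R e" using k by simp
    then show False using assms by (auto simp: nonparallel_def in_span_singleton_iff)
  qed
  then show ?thesis using nonparallel_nonzero(2)[OF assms] by (simp add: nonparallel_def)
qed

lemma dim_nonparallel_pair:
  assumes "nonparallel e g"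
  shows "dim {e, g} = 2"
proof -
  have "e \<notin> span {g}" "g \<noteq> 0"
    using nonparallel_sym[OF assms] by (auto simp: nonparallel_def)
  then show ?thesis by (simp add: dim_insert span_empty)
qed

lemma dim_singleton_nonzero: "(e::'a::euclidean_space) \<noteq> 0 \<Longrightarrow> dim {e} = 1"
  using dim_insert[of e "{}"] by (simp add: span_empty)

lemma span_eq_span_pair:
  assumes "nonparallel e g" "e \<in> span A" "g \<in> span A" "dim A \<le> 2"
  shows "span A = span {e, g}"
proof -
  have "span {e, g} \<subseteq> span A" using assms by (simp add: span_minimal subspace_span)
  moreover have "dim (span A) \<le> dim (span {e, g})"
    using assms(4) dim_nonparallel_pair[OF assms(1)] by simp
  ultimately show ?thesis
    using subspace_dim_equal[of "span {e, g}" "span A"] by simp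
qed

lemma span_eq_span_singleton:
  fixes e :: "'a::euclidean_space"
  assumes "e \<noteq> 0" "e \<in> span A" "dim A \<le> 1"
  shows "span A = span {e}"
proof -
  have "span {e} \<subseteq> span A" using assms by (simp add: span_minimal subspace_span)
  moreover have "dim (span A) \<le> dim (span {e})"
    using assms(3) dim_singleton_nonzero[OF assms(1)] by simp
  ultimately show ?thesis
    using subspace_dim_equal[of "span {e}" "span A"] by simp
qed

lemma obtain_nonzero_spanning:
  fixes A :: "'a::euclidean_space set"
  assumes "dim A = 1"
  obtains e where "e \<in> A" "e \<noteq> 0" "span A = span {e}"
proof -
  have "A \<noteq> {} \<and> A \<noteq> {0}" using assms by (auto simp: dim_insert span_empty)
  then obtain e where "e \<in> A" "e \<noteq> 0" by blast
  moreover have "span A = span {e}"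
    using calculation assms by (intro span_eq_span_singleton) (auto intro: span_base)
  ultimately show ?thesis by (rule that)
qed

lemma span_pair_eq_span_pair:
  assumes "nonparallel p q" "nonparallel a b" "p \<in> span {a, b}" "q \<in> span {a, b}"
  shows "span {a, b} = span {p, q}"
  using span_eq_span_pair[of p q "{a, b}"] assms dim_nonparallel_pair[OF assms(2)] by simp

lemma in_span_pair_iff: "h \<in> span {w, g} \<longleftrightarrow> (\<exists>\<alpha> \<beta>. h = \<alpha> *\<^sub>R w + \<beta> *\<^sub>R g)"
  by (auto simp: span_breakdown_eq in_span_singleton_iff) (metis add.commute diff_eq_eq)+

lemma span_pair_Int_span_pair:
  assumes "c \<notin> span {u, b}" "x \<in> span {u, b}" "x \<in> span {u, c}"
  shows "x \<in> span {u}"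
proof -
  obtain \<alpha> \<beta> where x1: "x = \<alpha> *\<^sub>R u + \<beta> *\<^sub>R b"
    using assms(2) by (auto simp: in_span_pair_iff)
  obtain \<gamma> \<delta> where x2: "x = \<gamma> *\<^sub>R u + \<delta> *\<^sub>R c"
    using assms(3) by (auto simp: in_span_pair_iff)
  have "\<delta> = 0"
  proof (rule ccontr)
    assume "\<delta> \<noteq> 0"
    have "\<delta> *\<^sub>R c = x - \<gamma> *\<^sub>R u" using x2 by simp
    also have "\<dots> = (\<alpha> - \<gamma>) *\<^sub>R u + \<beta> *\<^sub>R b" using x1 by (simp add: algebra_simps)
    finally have "\<delta> *\<^sub>R c \<in> span {u, b}" by (auto simp: in_span_pair_iff)
    then have "(1 / \<delta>) *\<^sub>R (\<delta> *\<^sub>R c) \<in> span {u, b}" by (rule span_scale)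
    then show False using \<open>\<delta> \<noteq> 0\<close> assms(1) by simp
  qed
  then show ?thesis using x2 by (simp add: in_span_singleton_iff)
qed

lemma in_span_singleton_if_in_two_planes:
  assumes bc: "nonparallel b c" and ub: "nonparallel u b" and u: "u \<notin> span {b, c}"
    and x: "x \<in> span {u, b}" "x \<in> span {u, c}"
  shows "x \<in> span {u}"
proof -
  have "c \<notin> span {u, b}"
  proof
    assume "c \<in> span {u, b}"
    then have "span {u, b} = span {b, c}"
      using span_pair_eq_span_pair[OF bc ub] by (simp add: span_base)
    then show False using u by (metis insertI1 span_base)
  qed
  then show ?thesis using span_pair_Int_span_pair x by blast
qed

lemma nonparallel_if_not_in_span_pair: "x \<noteq> 0 \<Longrightarrow> y \<notin> span {e, x} \<Longrightarrow> nonparallel x y"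
  using span_mono[of "{x}" "{e, x}"] by (auto simp: nonparallel_def)

lemma not_in_span_pair_rotate:
  assumes "nonparallel e x" "y \<notin> span {e, x}"
  shows "e \<notin> span {x, y}"
proof
  assume e: "e \<in> span {x, y}"
  have "nonparallel x y"
    using assms nonparallel_nonzero(2) nonparallel_if_not_in_span_pair by blast
  then have "span {x, y} = span {e, x}"
    using span_pair_eq_span_pair[OF assms(1)] e by (auto intro: span_base)
  then show False using assms(2) by (auto intro: span_base)
qed

lemma span_pair_eq_iff:
  assumes "nonparallel e x" "nonparallel e y"
  shows "span {e, x} = span {e, y} \<longleftrightarrow> y \<in> span {e, x}"
proof
  show "span {e, x} = span {e, y} \<Longrightarrow> y \<in> span {e, x}" by (simp add: span_base)
  show "y \<in> span {e, x} \<Longrightarrow> span {e, x} = span {e, y}"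
    using span_pair_eq_span_pair[OF assms(2) assms(1)] by (simp add: span_base)
qed

lemma span_pair_ne_span_pair:
  assumes "u \<notin> span {s, t}" "nonparallel s t"
  shows "span {u, s} \<noteq> span {u, t}"
proof
  assume eq: "span {u, s} = span {u, t}"
  have "card {u, s} \<le> 2" by (cases "u = s") auto
  then have "dim {u, s} \<le> 2"
    using dim_le_card[of "{u, s}" "{u, s}"] by (simp add: span_superset)
  then have "span {u, s} = span {s, t}"
    using span_eq_span_pair[OF assms(2)] eq by (auto intro: span_base simp: insert_commute)
  then show False using assms(1) by (auto intro: span_base)
qed

definition planes_through :: "'a::euclidean_space set \<Rightarrow> 'a \<Rightarrow> 'a set set" where
  "planes_through G w = {span {w, g} | g. g \<in> G \<and> g \<notin> span {w}}"

lemma finite_planes_through: "finite G \<Longrightarrow> finite (planes_through G w)"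
proof -
  have "planes_through G w = (\<lambda>g. span {w, g}) ` {g \<in> G. g \<notin> span {w}}"
    by (auto simp: planes_through_def)
  then show "finite G \<Longrightarrow> ?thesis" by simp
qed

lemma planes_throughE:
  assumes "\<pi> \<in> planes_through G w" "w \<noteq> 0"
  obtains g where "\<pi> = span {w, g}" "g \<in> G" "nonparallel w g"
  using assms by (auto simp: planes_through_def nonparallel_def)

lemma length_le_card_planes_through:
  assumes "finite G" "set gs \<subseteq> G" "\<forall>g\<in>set gs. g \<notin> span {w}"
    "distinct (map (\<lambda>g. span {w, g}) gs)"
  shows "length gs \<le> card (planes_through G w)"
proof -
  have "set (map (\<lambda>g. span {w, g}) gs) \<subseteq> planes_through G w"
    using assms(2,3) by (auto simp: planes_through_def)
  then have "card (set (map (\<lambda>g. span {w, g}) gs)) \<le> card (planes_through G w)"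
    by (intro card_mono finite_planes_through assms(1))
  then show ?thesis using distinct_card[OF assms(4)] by simp
qed

definition distinct_planes_through :: "'a::euclidean_space \<Rightarrow> 'a list \<Rightarrow> bool" where
  "distinct_planes_through e xs \<longleftrightarrow>
     (\<forall>x\<in>set xs. x \<notin> span {e}) \<and> distinct (map (\<lambda>x. span {e, x}) xs)"

lemma distinct_planes_through_distinct: "distinct_planes_through e xs \<Longrightarrow> distinct xs"
  by (simp add: distinct_planes_through_def distinct_map)

lemma distinct_planes_through_subset:
  "distinct_planes_through e xs \<Longrightarrow> set ys \<subseteq> set xs \<Longrightarrow> distinct ys \<Longrightarrow> distinct_planes_through e ys"
  unfolding distinct_planes_through_def distinct_map using inj_on_subset by blast

lemma distinct_planes_throughD:
  assumes "e \<noteq> 0" "distinct_planes_through e xs" "x \<in> set xs" "y \<in> set xs" "x \<noteq> y"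
  shows "y \<notin> span {e, x}"
proof -
  have "span {e, x} \<noteq> span {e, y}"
    using assms(2-5) by (auto simp: distinct_planes_through_def distinct_map inj_on_def)
  moreover have "nonparallel e x" "nonparallel e y"
    using assms by (auto simp: distinct_planes_through_def nonparallel_def)
  ultimately show ?thesis by (simp add: span_pair_eq_iff)
qed

lemma distinct_planes_through_Cons:
  assumes "e \<noteq> 0"
  shows "distinct_planes_through e (u # xs) \<longleftrightarrow>
    distinct_planes_through e xs \<and> u \<notin> span {e} \<and> (\<forall>x\<in>set xs. u \<notin> span {e, x})"
proof (cases "u \<notin> span {e} \<and> (\<forall>x\<in>set xs. x \<notin> span {e})")
  case True
  have "span {e, u} = span {e, x} \<longleftrightarrow> u \<in> span {e, x}" if "x \<in> set xs" for x
    using span_pair_eq_iff[of e x u] that True assms by (auto simp: nonparallel_def)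
  then have "span {e, u} \<in> (\<lambda>x. span {e, x}) ` set xs \<longleftrightarrow> (\<exists>x\<in>set xs. u \<in> span {e, x})"
    unfolding image_iff by (intro bex_cong) auto
  then show ?thesis using True unfolding distinct_planes_through_def by auto
next
  case False
  then show ?thesis unfolding distinct_planes_through_def by auto
qed

lemma obtain_distinct_planes_through:
  assumes "n \<le> card (planes_through G e)"
  obtains xs where "length xs = n" "set xs \<subseteq> G" "distinct_planes_through e xs"
proof -
  obtain B where B: "B \<subseteq> planes_through G e" "card B = n" "finite B"
    using obtain_subset_with_card_n[OF assms] by blast
  obtain ps where ps: "set ps = B" "distinct ps"
    using finite_distinct_list[OF B(3)] by blast
  define pick where "pick \<pi> = (SOME g. g \<in> G \<and> g \<notin> span {e} \<and> \<pi> = span {e, g})" for \<pi>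
  have pick: "pick \<pi> \<in> G" "pick \<pi> \<notin> span {e}" "\<pi> = span {e, pick \<pi>}" if "\<pi> \<in> B" for \<pi>
  proof -
    have "\<exists>g. g \<in> G \<and> g \<notin> span {e} \<and> \<pi> = span {e, g}"
      using that B(1) by (auto simp: planes_through_def)
    then show "pick \<pi> \<in> G" "pick \<pi> \<notin> span {e}" "\<pi> = span {e, pick \<pi>}"
      unfolding pick_def by (metis (mono_tags, lifting) someI_ex)+
  qed
  have "map (\<lambda>x. span {e, x}) (map pick ps) = ps"
    unfolding map_map by (rule map_idI) (use pick(3) ps(1) in auto)
  then have "distinct_planes_through e (map pick ps)"
    using ps pick(2) by (auto simp: distinct_planes_through_def)
  moreover have "length (map pick ps) = n" using ps B(2) distinct_card by fastforce
  moreover have "set (map pick ps) \<subseteq> G" using ps(1) pick(1) by auto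
  ultimately show ?thesis using that by blast
qed

text \<open>The generators of a putative counterexample; its last lemma contradicts #B(E) = 8.\<close>

locale few_planes =
  fixes G :: "'a::euclidean_space set" and e :: 'a
  assumes finite_G: "finite G" and e_in_G: "e \<in> G" and e_nonzero: "e \<noteq> 0"
    and card_planes_through_le_3: "\<And>w. w \<in> G \<Longrightarrow> w \<notin> span {e} \<Longrightarrow> card (planes_through G w) \<le> 3"
    and not_plane_and_line: "\<And>a b. a \<in> G \<Longrightarrow> b \<in> G \<Longrightarrow> nonparallel a b \<Longrightarrow> e \<notin> span {a, b} \<Longrightarrow>
      \<exists>u\<in>G. u \<notin> span {a, b} \<and> u \<notin> span {e}"
begin

lemma no_three_further_planes:
  assumes "w \<in> G" "w \<notin> span {e}" "{s1, s2, s3} \<subseteq> G"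
    and "s1 \<notin> span {e, w}" "s2 \<notin> span {e, w}" "s3 \<notin> span {e, w}"
    and "distinct [span {w, s1}, span {w, s2}, span {w, s3}]"
  shows False
proof -
  have "s \<notin> span {w}" if "s \<notin> span {e, w}" for s
    using that span_mono[of "{w}" "{e, w}"] by blast
  moreover have "e \<notin> span {w}"
    using nonparallel_sym[of e w] assms(2) e_nonzero by (simp add: nonparallel_def)
  moreover have "span {w, e} \<noteq> span {w, s}" if "s \<notin> span {e, w}" for s
  proof
    assume "span {w, e} = span {w, s}"
    then have "s \<in> span {w, e}" by (simp add: span_base)
    then show False using that by (simp add: insert_commute)
  qed
  ultimately have "length [e, s1, s2, s3] \<le> card (planes_through G w)"
    using assms by (intro length_le_card_planes_through finite_G) (auto simp: e_in_G)
  then show False using card_planes_through_le_3[OF assms(1,2)] by simp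
qed

lemma plane_through_among_two:
  assumes "w \<in> G" "w \<notin> span {e}" "{s1, s2, x} \<subseteq> G"
    and "s1 \<notin> span {e, w}" "s2 \<notin> span {e, w}" "x \<notin> span {e, w}"
    and "span {w, s1} \<noteq> span {w, s2}"
  shows "span {w, x} = span {w, s1} \<or> span {w, x} = span {w, s2}"
  using no_three_further_planes[OF assms(1-6)] assms(7) by auto

lemma coplanar_triple_no_fourth_plane:
  assumes planes: "distinct_planes_through e [u, p, q, r]" and G: "{u, p, q, r} \<subseteq> G"
    and r: "r \<in> span {p, q}" and u: "u \<notin> span {p, q}"
  shows False
proof -
  note off = distinct_planes_throughD[OF e_nonzero planes]
  have dist: "distinct [u, p, q, r]" using distinct_planes_through_distinct[OF planes] .
  have nz: "p \<noteq> 0" "q \<noteq> 0" and "u \<notin> span {e}"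
    using planes span_zero by (auto simp: distinct_planes_through_def)
  have pq: "nonparallel p q" and pr: "nonparallel p r" and qr: "nonparallel q r"
    using nonparallel_if_not_in_span_pair[OF nz(1)] nonparallel_if_not_in_span_pair[OF nz(2)]
      off[of p q] off[of p r] off[of q r] dist by simp_all
  have "span {p, q} = span {p, r}" "span {p, q} = span {q, r}"
    using span_pair_eq_span_pair[OF pr pq] span_pair_eq_span_pair[OF qr pq] r
    by (auto intro: span_base)
  then have "u \<notin> span {p, r}" "u \<notin> span {q, r}" using u by simp_all
  then have planes_u: "distinct [span {u, p}, span {u, q}, span {u, r}]"
    using span_pair_ne_span_pair[OF u pq] span_pair_ne_span_pair[OF _ pr]
      span_pair_ne_span_pair[OF _ qr] by simp
  have off_u: "p \<notin> span {e, u}" "q \<notin> span {e, u}" "r \<notin> span {e, u}"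
    using off[of u p] off[of u q] off[of u r] dist by simp_all
  have "u \<in> G" "{p, q, r} \<subseteq> G" using G by simp_all
  from no_three_further_planes[OF this(1) \<open>u \<notin> span {e}\<close> this(2) off_u planes_u]
  show False .
qed

lemma coplanar_triple_no_point_in_plane:
  assumes planes: "distinct_planes_through e [a, b, c, x]" and G: "{a, b, c, x, u} \<subseteq> G"
    and a: "a \<in> span {b, c}" and u: "u \<notin> span {b, c}" "u \<in> span {e, a}" "u \<notin> span {e}"
  shows False
proof -
  note off = distinct_planes_throughD[OF e_nonzero planes]
  have dist: "distinct [a, b, c, x]" using distinct_planes_through_distinct[OF planes] .
  have off_e: "b \<notin> span {e}" "c \<notin> span {e}"
    using planes by (auto simp: distinct_planes_through_def)
  have u_line: "span {u} \<subseteq> span {e, a}"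
    by (rule span_minimal) (use u(2) in auto)
  have u_off: "u \<notin> span {e, s}" if "s \<in> {b, c, x}" for s
  proof
    assume "u \<in> span {e, s}"
    moreover have "s \<notin> span {e, a}" using off[of a s] that dist by auto
    ultimately have "u \<in> span {e}" using span_pair_Int_span_pair[of s e a u] u(2) by blast
    then show False using u(3) by blast
  qed
  have off_b: "c \<notin> span {e, b}" "u \<notin> span {e, b}" "x \<notin> span {e, b}"
    using off[of b c] off[of b x] u_off dist by simp_all
  have off_c: "b \<notin> span {e, c}" "u \<notin> span {e, c}" "x \<notin> span {e, c}"
    using off[of c b] off[of c x] u_off dist by auto
  have neq: "span {b, c} \<noteq> span {b, u}" "span {c, b} \<noteq> span {c, u}"
    using u(1) by (auto simp: insert_commute intro: span_base)
  have G_bc: "b \<in> G" "{c, u, x} \<subseteq> G" "c \<in> G" "{b, u, x} \<subseteq> G" using G by simp_all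
  have b_sees: "span {b, x} = span {b, c} \<or> span {b, x} = span {b, u}"
    using plane_through_among_two[OF G_bc(1) off_e(1) G_bc(2) off_b neq(1)] .
  have c_sees: "span {c, x} = span {c, b} \<or> span {c, x} = span {c, u}"
    using plane_through_among_two[OF G_bc(3) off_e(2) G_bc(4) off_c neq(2)] .
  show False
  proof (cases "x \<in> span {b, c}")
    case True
    have "distinct_planes_through e [u, b, c, x]"
      using distinct_planes_through_subset[OF planes, of "[b, c, x]"] dist u(3) u_off
      by (simp add: distinct_planes_through_Cons e_nonzero)
    then show False
      by (rule coplanar_triple_no_fourth_plane[OF _ _ True u(1)]) (use G in simp)
  next
    case False
    then have x_in: "x \<in> span {u, b}" "x \<in> span {u, c}"
      using b_sees c_sees by (auto simp: insert_commute intro: span_base)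
    have "b \<noteq> 0" using off_e span_zero by auto
    then have bc: "nonparallel b c"
      using nonparallel_if_not_in_span_pair off[of b c] dist by simp
    have "u \<noteq> 0" using u(3) span_zero by auto
    moreover have "b \<notin> span {u}" using u_line off[of a b] dist by auto
    ultimately have ub: "nonparallel u b" by (simp add: nonparallel_def)
    have "x \<in> span {u}" using in_span_singleton_if_in_two_planes[OF bc ub u(1) x_in] .
    then have "x \<in> span {e, a}" using u_line by blast
    then show False using off[of a x] dist by auto
  qed
qed

lemma no_coplanar_triple:
  assumes planes: "distinct_planes_through e [a, b, c, x]" and G: "{a, b, c, x} \<subseteq> G"
    and c: "c \<in> span {a, b}"
  shows False
proof -
  note off = distinct_planes_throughD[OF e_nonzero planes]
  have dist: "distinct [a, b, c, x]" using distinct_planes_through_distinct[OF planes] .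
  have off_e: "a \<notin> span {e}" "b \<notin> span {e}"
    using planes by (auto simp: distinct_planes_through_def)
  have nz: "a \<noteq> 0" "b \<noteq> 0" using off_e span_zero by auto
  have ab: "nonparallel a b" and ac: "nonparallel a c" and bc: "nonparallel b c"
    using nonparallel_if_not_in_span_pair[OF nz(1)] nonparallel_if_not_in_span_pair[OF nz(2)]
      off[of a b] off[of a c] off[of b c] dist by simp_all
  have "e \<notin> span {a, b}"
    using not_in_span_pair_rotate[of e a b] off[of a b] off_e dist e_nonzero
    by (simp add: nonparallel_def)
  then obtain u where u: "u \<in> G" "u \<notin> span {a, b}" "u \<notin> span {e}"
    using not_plane_and_line[OF _ _ ab] G by auto
  have T: "span {a, b} = span {b, c}" "span {a, b} = span {a, c}"
    using span_pair_eq_span_pair[OF bc ab] span_pair_eq_span_pair[OF ac ab] c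
    by (auto intro: span_base)
  have in_T: "a \<in> span {b, c}" "b \<in> span {a, c}"
    using T by (auto intro: span_base)
  have G': "{a, b, c, x, u} \<subseteq> G" "{b, a, c, x, u} \<subseteq> G" "{c, a, b, x, u} \<subseteq> G"
    "{u, a, b, c} \<subseteq> G"
    using G u(1) by auto
  consider "u \<in> span {e, a}" | "u \<in> span {e, b}" | "u \<in> span {e, c}"
    | "u \<notin> span {e, a}" "u \<notin> span {e, b}" "u \<notin> span {e, c}"
    by blast
  then show False
  proof cases
    case 1
    show False
      using coplanar_triple_no_point_in_plane[OF planes G'(1) in_T(1) _ 1 u(3)] u(2) T(1) by simp
  next
    case 2
    have "distinct_planes_through e [b, a, c, x]"
      using distinct_planes_through_subset[OF planes] dist by auto
    from coplanar_triple_no_point_in_plane[OF this G'(2) in_T(2) _ 2 u(3)] show False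
      using u(2) T(2) by simp
  next
    case 3
    have "distinct_planes_through e [c, a, b, x]"
      using distinct_planes_through_subset[OF planes] dist by auto
    from coplanar_triple_no_point_in_plane[OF this G'(3) c u(2) 3 u(3)] show False .
  next
    case 4
    have "distinct_planes_through e [u, a, b, c]"
      using distinct_planes_through_subset[OF planes, of "[a, b, c]"] dist u(3) 4
      by (simp add: distinct_planes_through_Cons e_nonzero)
    from coplanar_triple_no_fourth_plane[OF this G'(4) c u(2)] show False .
  qed
qed

lemma card_planes_through_e_le_3: "card (planes_through G e) \<le> 3"
proof (rule ccontr)
  assume "\<not> ?thesis"
  then obtain xs where xs: "length xs = 4" "set xs \<subseteq> G" "distinct_planes_through e xs"
    using obtain_distinct_planes_through[of 4 G e] by auto
  then obtain x1 x2 x3 x4 where xs_eq: "xs = [x1, x2, x3, x4]"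
    by (auto simp: numeral_eq_Suc length_Suc_conv)
  note planes = xs(3)[unfolded xs_eq]
  have G: "{x1, x2, x3, x4} \<subseteq> G" using xs(2) xs_eq by simp
  note off = distinct_planes_throughD[OF e_nonzero planes]
  have dist: "distinct [x1, x2, x3, x4]" using distinct_planes_through_distinct[OF planes] .
  consider "span {x1, x2} = span {x1, x3}" | "span {x1, x2} = span {x1, x4}"
    | "span {x1, x3} = span {x1, x4}" | "distinct [span {x1, x2}, span {x1, x3}, span {x1, x4}]"
    by force
  then show False
  proof cases
    case 1
    then have "x3 \<in> span {x1, x2}" by (metis insertI1 insert_commute span_base)
    from no_coplanar_triple[OF planes G this] show False .
  next
    case 2
    then have "x4 \<in> span {x1, x2}" by (metis insertI1 insert_commute span_base)
    moreover have "distinct_planes_through e [x1, x2, x4, x3]"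
      using distinct_planes_through_subset[OF planes] dist by auto
    moreover have "{x1, x2, x4, x3} \<subseteq> G" using G by auto
    ultimately show False using no_coplanar_triple by blast
  next
    case 3
    then have "x4 \<in> span {x1, x3}" by (metis insertI1 insert_commute span_base)
    moreover have "distinct_planes_through e [x1, x3, x4, x2]"
      using distinct_planes_through_subset[OF planes] dist by auto
    moreover have "{x1, x3, x4, x2} \<subseteq> G" using G by auto
    ultimately show False using no_coplanar_triple by blast
  next
    case 4
    have x1: "x1 \<in> G" "x1 \<notin> span {e}" "{x2, x3, x4} \<subseteq> G"
      using planes G by (auto simp: distinct_planes_through_def)
    have "x2 \<notin> span {e, x1}" "x3 \<notin> span {e, x1}" "x4 \<notin> span {e, x1}"
      using off[of x1 x2] off[of x1 x3] off[of x1 x4] dist by simp_all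
    from no_three_further_planes[OF x1 this 4] show False .
  qed
qed

end

lemma exists_nonparallel_with_four_planes:
  fixes G :: "'a::euclidean_space set"
  assumes "finite G" "e \<in> G" "e \<noteq> 0" "4 \<le> card (planes_through G e)"
    and "\<And>a b. a \<in> G \<Longrightarrow> b \<in> G \<Longrightarrow> nonparallel a b \<Longrightarrow> e \<notin> span {a, b} \<Longrightarrow>
      \<exists>u\<in>G. u \<notin> span {a, b} \<and> u \<notin> span {e}"
  shows "\<exists>w\<in>G. w \<notin> span {e} \<and> 4 \<le> card (planes_through G w)"
proof (rule ccontr)
  assume "\<not> ?thesis"
  then interpret few_planes G e
    using assms by unfold_locales (auto simp: not_le)
  show False using card_planes_through_e_le_3 assms(4) by simp
qed

lemma maximizers_ne_maximizers_uminus: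
  fixes S :: "'a::euclidean_space set"
  assumes "aff_dim S = int DIM('a)" "c \<noteq> 0" "maximizers c S \<noteq> {}"
  shows "maximizers c S \<noteq> maximizers (- c) S"
proof
  assume eq: "maximizers c S = maximizers (- c) S"
  obtain x0 where x0: "x0 \<in> maximizers c S" "x0 \<in> maximizers (- c) S"
    using assms(3) eq by auto
  have "c \<bullet> y = c \<bullet> x0" if "y \<in> S" for y
    using x0 that unfolding maximizers_def by (auto intro: order_antisym)
  then have "{x - y |x y. x \<in> S \<and> y \<in> S} \<subseteq> {z. c \<bullet> z = 0}"
    by (auto simp: inner_diff_right)
  then have "direction S \<subseteq> {z. c \<bullet> z = 0}"
    unfolding direction_def by (rule span_minimal) (rule subspace_hyperplane)
  then have "dim (direction S) \<le> DIM('a) - 1"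
    using dim_subset dim_hyperplane[OF assms(2)] by metis
  moreover have "S \<noteq> {}" using x0 by (auto simp: maximizers_def)
  ultimately show False
    using assms(1) aff_dim_eq_dim_direction[of S] DIM_positive[where 'a='a] by linarith
qed

context
  fixes segs :: "('a::euclidean_space \<times> 'a) list"
begin

lemma facet_of_zonotope_of:
  assumes "F facet_of zonotope_of segs"
  obtains c where "c \<noteq> 0" "F = maximizers c (zonotope_of segs)"
    "Suc (dim (generators_perp c segs)) = dim (generators segs)"
proof -
  have F: "F face_of zonotope_of segs" "F \<noteq> {}"
    "aff_dim F = aff_dim (zonotope_of segs) - 1"
    using assms by (auto simp: facet_of_def)
  obtain c where c: "F = maximizers c (zonotope_of segs)"
    using face_of_zonotope_of_eq_maximizers F(1,2) by blast
  have dims: "Suc (dim (generators_perp c segs)) = dim (generators segs)"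
    using F(3) c by (simp add: aff_dim_maximizers_zonotope_of aff_dim_zonotope_of)
  then have "c \<noteq> 0" by (auto simp: generators_perp_def)
  then show ?thesis using c dims by (rule that)
qed

lemma edge_of_zonotope_of:
  assumes "E edge_of zonotope_of segs"
  obtains c where "E = maximizers c (zonotope_of segs)" "dim (generators_perp c segs) = 1"
proof -
  have E: "E face_of zonotope_of segs" "aff_dim E = 1"
    using assms by (simp_all only: edge_of_def)
  moreover have "E \<noteq> {}" using E(2) by auto
  ultimately obtain c where c: "E = maximizers c (zonotope_of segs)"
    using face_of_zonotope_of_eq_maximizers by blast
  moreover have "dim (generators_perp c segs) = 1"
    using E(2) c by (simp add: aff_dim_maximizers_zonotope_of)
  ultimately show ?thesis by (rule that)
qed

lemma maximizers_facet_of_zonotope_of: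
  assumes "Suc (dim (generators_perp c segs)) = dim (generators segs)"
  shows "maximizers c (zonotope_of segs) facet_of zonotope_of segs"
  by (simp add: facet_of_def maximizers_face_of_zonotope_of maximizers_zonotope_of_nonempty
      aff_dim_maximizers_zonotope_of aff_dim_zonotope_of assms[symmetric])

lemma maximizers_edge_of_zonotope_of:
  assumes "dim (generators_perp c segs) = 1"
  shows "maximizers c (zonotope_of segs) edge_of zonotope_of segs"
  by (simp add: edge_of_def maximizers_face_of_zonotope_of aff_dim_maximizers_zonotope_of assms)

lemma span_generators_perp_eq_span_singleton:
  assumes "w \<in> generators segs" "w \<noteq> 0"
    and "\<And>h. h \<in> generators segs \<Longrightarrow> c \<bullet> h = 0 \<longleftrightarrow> h \<in> span {w}"
  shows "span (generators_perp c segs) = span {w}"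
proof -
  have "generators_perp c segs \<subseteq> span {w}" using assms by (auto simp: generators_perp_def)
  moreover have "w \<in> generators_perp c segs"
    using assms by (auto simp: generators_perp_def intro: span_base)
  ultimately show ?thesis
    by (metis span_eq span_superset subset_iff insert_subset empty_subsetI)
qed

lemma maximizers_edge_parallel_to:
  assumes "w \<in> generators segs" "w \<noteq> 0"
    and "\<And>h. h \<in> generators segs \<Longrightarrow> c \<bullet> h = 0 \<longleftrightarrow> h \<in> span {w}"
  shows "maximizers c (zonotope_of segs) edge_of zonotope_of segs"
    and "direction (maximizers c (zonotope_of segs)) = span {w}"
proof -
  have span_perp: "span (generators_perp c segs) = span {w}"
    using span_generators_perp_eq_span_singleton[OF assms] .
  then have "dim (generators_perp c segs) = 1"
    using dim_singleton_nonzero[OF assms(2)] by (metis dim_span)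
  then show "maximizers c (zonotope_of segs) edge_of zonotope_of segs"
    by (rule maximizers_edge_of_zonotope_of)
  show "direction (maximizers c (zonotope_of segs)) = span {w}"
    unfolding direction_maximizers_zonotope_of using span_perp .
qed

end

lemma obtain_orthogonal_in_plane:
  assumes "nonparallel w g"
  obtains d where "d \<bullet> w = 0" "\<And>h. h \<in> span {w, g} \<Longrightarrow> d \<bullet> h = 0 \<longleftrightarrow> h \<in> span {w}"
proof -
  have w0: "w \<noteq> 0" and gw: "g \<notin> span {w}" using assms by (auto simp: nonparallel_def)
  define d where "d = g - ((g \<bullet> w) / (w \<bullet> w)) *\<^sub>R w"
  have dw: "d \<bullet> w = 0" unfolding d_def using w0 by (simp add: inner_diff_left)
  have "d \<noteq> 0"
    using gw unfolding d_def by (metis eq_iff_diff_eq_0 span_base span_scale singletonI)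
  moreover have "d \<bullet> g = d \<bullet> d"
    using dw unfolding d_def by (simp add: inner_diff_right)
  ultimately have dg: "d \<bullet> g > 0" by simp
  have "d \<bullet> h = 0 \<longleftrightarrow> h \<in> span {w}" if h_in: "h \<in> span {w, g}" for h
  proof -
    obtain \<alpha> \<beta> where h: "h = \<alpha> *\<^sub>R w + \<beta> *\<^sub>R g" using h_in by (auto simp: in_span_pair_iff)
    have "h \<in> span {w} \<longleftrightarrow> \<beta> = 0"
    proof
      assume "h \<in> span {w}"
      then have "\<beta> *\<^sub>R g \<in> span {w}"
        using h by (metis add_diff_cancel_left' span_diff span_base span_scale singletonI)
      then show "\<beta> = 0" using gw span_scale[of "\<beta> *\<^sub>R g" "{w}" "1 / \<beta>"] by (auto split: if_splits)
    qed (simp add: h span_base span_scale)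
    then show ?thesis using dw dg h by (simp add: inner_add_right)
  qed
  with dw show ?thesis by (rule that)
qed

lemma small_positive_multiplier:
  fixes s d :: "'a::real_inner"
  assumes "finite S"
  obtains \<epsilon> where "\<epsilon> > 0" "\<And>h. h \<in> S \<Longrightarrow> s \<bullet> h \<noteq> 0 \<Longrightarrow> \<epsilon> * \<bar>d \<bullet> h\<bar> < \<bar>s \<bullet> h\<bar>"
proof (cases "{h\<in>S. s \<bullet> h \<noteq> 0} = {}")
  case True
  then show ?thesis using that[of 1] by auto
next
  case False
  let ?S = "{h\<in>S. s \<bullet> h \<noteq> 0}"
  let ?f = "\<lambda>h. \<bar>s \<bullet> h\<bar> / (\<bar>d \<bullet> h\<bar> + 1)"
  define \<epsilon> where "\<epsilon> = Min (?f ` ?S)"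
  have fin: "finite (?f ` ?S)" using assms by simp
  have pos: "\<epsilon> > 0" unfolding \<epsilon>_def using fin False
    by (subst Min_gr_iff) (auto intro!: divide_pos_pos)
  have "\<epsilon> * \<bar>d \<bullet> h\<bar> < \<bar>s \<bullet> h\<bar>" if h: "h \<in> S" "s \<bullet> h \<noteq> 0" for h
  proof -
    have "\<epsilon> \<le> ?f h" unfolding \<epsilon>_def using fin h by (intro Min_le) auto
    then have "\<epsilon> * \<bar>d \<bullet> h\<bar> \<le> ?f h * \<bar>d \<bullet> h\<bar>" by (intro mult_right_mono) auto
    also have "\<dots> = \<bar>s \<bullet> h\<bar> * (\<bar>d \<bullet> h\<bar> / (\<bar>d \<bullet> h\<bar> + 1))" by simp
    also have "\<dots> < \<bar>s \<bullet> h\<bar> * 1"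
      using h by (intro mult_strict_left_mono) auto
    finally show ?thesis by simp
  qed
  then show ?thesis using pos that by blast
qed

text \<open>Tilting s slightly towards a vector d that is orthogonal to w but to no other direction of
  span {w, g} keeps the sign of s on every generator not orthogonal to s, while of the generators
  in span {w, g} only the multiples of w stay orthogonal: the tilted functional selects an edge
  parallel to w inside the face of s.\<close>

lemma maximizers_tilt_to_edge:
  fixes segs :: "('a::euclidean_space \<times> 'a) list"
  assumes wg: "nonparallel w g" and sw: "s \<bullet> w = 0"
    and sh: "\<And>h. h \<in> generators segs \<Longrightarrow> s \<bullet> h = 0 \<Longrightarrow> h \<in> span {w, g}"
  obtains c where "maximizers c (zonotope_of segs) \<subseteq> maximizers s (zonotope_of segs)"
    "\<And>h. h \<in> generators segs \<Longrightarrow> c \<bullet> h = 0 \<longleftrightarrow> h \<in> span {w}"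
proof -
  obtain d where dw: "d \<bullet> w = 0" and d_perp: "\<And>h. h \<in> span {w, g} \<Longrightarrow> d \<bullet> h = 0 \<longleftrightarrow> h \<in> span {w}"
    using obtain_orthogonal_in_plane[OF wg] by blast
  obtain \<epsilon> where \<epsilon>: "\<epsilon> > 0" "\<And>h. h \<in> generators segs \<Longrightarrow> s \<bullet> h \<noteq> 0 \<Longrightarrow> \<epsilon> * \<bar>d \<bullet> h\<bar> < \<bar>s \<bullet> h\<bar>"
    using small_positive_multiplier[OF finite_generators] by blast
  define c where "c = s + \<epsilon> *\<^sub>R d"
  have ch: "c \<bullet> h = s \<bullet> h + \<epsilon> * (d \<bullet> h)" for h by (simp add: c_def inner_add_left)
  have same_sign: "c \<bullet> h \<noteq> 0 \<and> (c \<bullet> h < 0 \<longleftrightarrow> s \<bullet> h < 0)"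
    if "h \<in> generators segs" "s \<bullet> h \<noteq> 0" for h
  proof -
    have "\<bar>\<epsilon> * (d \<bullet> h)\<bar> < \<bar>s \<bullet> h\<bar>" using \<epsilon> that by (simp add: abs_mult)
    then show ?thesis unfolding ch by linarith
  qed
  have "maximizers c (zonotope_of segs) \<subseteq> maximizers s (zonotope_of segs)"
    by (rule maximizers_zonotope_of_mono) (use same_sign in auto)
  moreover have "c \<bullet> h = 0 \<longleftrightarrow> h \<in> span {w}" if h: "h \<in> generators segs" for h
  proof (cases "s \<bullet> h = 0")
    case True
    then show ?thesis using d_perp sh h \<epsilon>(1) unfolding ch by simp
  next
    case False
    then have "h \<notin> span {w}" using sw by (auto simp: in_span_singleton_iff)
    then show ?thesis using same_sign[OF h False] by simp
  qed
  ultimately show ?thesis by (rule that)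
qed

lemma inner_eq_0_on_span_pair:
  "c \<bullet> e = 0 \<Longrightarrow> c \<bullet> g = 0 \<Longrightarrow> h \<in> span {e, g} \<Longrightarrow> c \<bullet> h = 0"
  using orthogonal_to_span[of h "{e, g}" c] by (auto simp: orthogonal_def)

lemma cross3_nonzero: "nonparallel e g \<Longrightarrow> cross3 e g \<noteq> 0"
  by (auto simp: nonparallel_def cross_eq_0 collinear_lemma in_span_singleton_iff)

lemma orthogonal_pair_obtain_multiple_cross3:
  assumes "nonparallel e g" "c \<bullet> e = 0" "c \<bullet> g = 0"
  obtains k where "c = k *\<^sub>R cross3 e g"
proof -
  have "cross3 c (cross3 e g) = 0" using assms by (simp add: Lagrange)
  then have "collinear {0, cross3 e g, c}" by (simp add: cross_eq_0 insert_commute)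
  then show ?thesis using that cross3_nonzero[OF assms(1)] by (auto simp: collinear_lemma)
qed

lemma inner_eq_0_iff_in_span_pair:
  fixes c :: "real^3"
  assumes "nonparallel e g" "c \<noteq> 0" "c \<bullet> e = 0" "c \<bullet> g = 0"
  shows "c \<bullet> h = 0 \<longleftrightarrow> h \<in> span {e, g}"
proof -
  let ?H = "{x. c \<bullet> x = 0}"
  have "span {e, g} \<subseteq> ?H"
    using inner_eq_0_on_span_pair[OF assms(3,4)] by blast
  moreover have "dim ?H \<le> dim (span {e, g})"
    using dim_hyperplane[OF assms(2)] dim_nonparallel_pair[OF assms(1)] by simp
  ultimately have "span {e, g} = ?H"
    using subspace_dim_equal subspace_hyperplane by (metis subspace_span)
  then show ?thesis by auto
qed

definition faces_parallel_to :: "'a::real_inner set \<Rightarrow> 'a set \<Rightarrow> 'a set set" where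
  "faces_parallel_to S \<pi> = {maximizers c S | c. c \<noteq> 0 \<and> (\<forall>x\<in>\<pi>. c \<bullet> x = 0)}"

lemma faces_parallel_to_span_pair:
  fixes w g :: "real^3"
  assumes "nonparallel w g"
  shows "faces_parallel_to S (span {w, g}) = {maximizers (cross3 w g) S, maximizers (- cross3 w g) S}"
proof (intro equalityI subsetI)
  fix F assume "F \<in> faces_parallel_to S (span {w, g})"
  then obtain c where c: "c \<noteq> 0" "\<forall>x\<in>span {w, g}. c \<bullet> x = 0" "F = maximizers c S"
    by (auto simp: faces_parallel_to_def)
  obtain k where k: "c = k *\<^sub>R cross3 w g"
    using orthogonal_pair_obtain_multiple_cross3[OF assms] c(2) by (metis insertI1 insert_commute span_base)
  consider "k > 0" | "k < 0" using k c(1) by fastforce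
  then show "F \<in> {maximizers (cross3 w g) S, maximizers (- cross3 w g) S}"
  proof cases
    case 1
    then show ?thesis using c(3) k by (simp add: maximizers_scaleR)
  next
    case 2
    then show ?thesis
      using c(3) k maximizers_scaleR[of "- k" "- cross3 w g" S] by simp
  qed
next
  fix F assume F: "F \<in> {maximizers (cross3 w g) S, maximizers (- cross3 w g) S}"
  have member: "maximizers c S \<in> faces_parallel_to S (span {w, g})"
    if "c \<noteq> 0" "\<forall>x\<in>span {w, g}. c \<bullet> x = 0" for c
    using that unfolding faces_parallel_to_def by blast
  have "\<forall>x\<in>span {w, g}. cross3 w g \<bullet> x = 0"
    using inner_eq_0_on_span_pair dot_cross_self by (metis inner_commute)
  then show "F \<in> faces_parallel_to S (span {w, g})"
    using F member[of "cross3 w g"] member[of "- cross3 w g"] cross3_nonzero[OF assms] by auto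
qed

lemma face_parallel_to_span_pair:
  fixes segs :: "((real^3) \<times> (real^3)) list"
  assumes wg: "nonparallel w g" "w \<in> generators segs" "g \<in> generators segs"
    and F: "F \<in> faces_parallel_to (zonotope_of segs) (span {w, g})"
  obtains s where "F = maximizers s (zonotope_of segs)" "s \<bullet> w = 0"
    "\<And>h. s \<bullet> h = 0 \<longleftrightarrow> h \<in> span {w, g}"
    "span (generators_perp s segs) = span {w, g}"
proof -
  obtain s where s: "s \<noteq> 0" "\<forall>x\<in>span {w, g}. s \<bullet> x = 0" "F = maximizers s (zonotope_of segs)"
    using F by (auto simp: faces_parallel_to_def)
  have sw: "s \<bullet> w = 0" "s \<bullet> g = 0" using s(2) by (auto intro: span_base)
  note perp = inner_eq_0_iff_in_span_pair[OF wg(1) s(1) sw]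
  have "generators_perp s segs \<subseteq> span {w, g}" using perp by (auto simp: generators_perp_def)
  moreover have "{w, g} \<subseteq> generators_perp s segs" using sw wg by (auto simp: generators_perp_def)
  ultimately have "span (generators_perp s segs) = span {w, g}"
    unfolding span_eq using span_superset by blast
  with s(3) sw(1) perp show ?thesis by (rule that)
qed

lemma face_parallel_to_obtain_edge:
  fixes segs :: "((real^3) \<times> (real^3)) list"
  assumes wG: "w \<in> generators segs" and w0: "w \<noteq> 0"
    and \<pi>: "\<pi> \<in> planes_through (generators segs) w" and F: "F \<in> faces_parallel_to (zonotope_of segs) \<pi>"
  obtains c where "maximizers c (zonotope_of segs) \<subseteq> F"
    "\<And>h. h \<in> generators segs \<Longrightarrow> c \<bullet> h = 0 \<longleftrightarrow> h \<in> span {w}"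
proof -
  obtain g where g: "\<pi> = span {w, g}" "g \<in> generators segs" "nonparallel w g"
    using planes_throughE[OF \<pi> w0] .
  obtain s where s: "F = maximizers s (zonotope_of segs)" "s \<bullet> w = 0"
    "\<And>h. s \<bullet> h = 0 \<longleftrightarrow> h \<in> span {w, g}"
    using face_parallel_to_span_pair[OF g(3) wG g(2)] F g(1) by metis
  show ?thesis
    using maximizers_tilt_to_edge[OF g(3) s(2)] s(1,3) that by metis
qed

lemma finite_faces_parallel_to_planes_through:
  fixes G :: "(real^3) set"
  shows "\<pi> \<in> planes_through G w \<Longrightarrow> w \<noteq> 0 \<Longrightarrow> finite (faces_parallel_to S \<pi>)"
  by (erule planes_throughE) (simp_all add: faces_parallel_to_span_pair)

context
  fixes segs :: "((real^3) \<times> (real^3)) list"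
  assumes full: "aff_dim (zonotope_of segs) = 3"
begin

lemma card_faces_parallel_to_span_pair:
  assumes "nonparallel w g"
  shows "card (faces_parallel_to (zonotope_of segs) (span {w, g})) = 2"
  using maximizers_ne_maximizers_uminus[OF _ cross3_nonzero[OF assms] maximizers_zonotope_of_nonempty]
    full by (simp add: faces_parallel_to_span_pair[OF assms])

lemma face_parallel_to_span_pair_facet:
  assumes "nonparallel w g" "w \<in> generators segs" "g \<in> generators segs"
    and "F \<in> faces_parallel_to (zonotope_of segs) (span {w, g})"
  shows "F facet_of zonotope_of segs" "direction F = span {w, g}"
proof -
  obtain s where s: "F = maximizers s (zonotope_of segs)"
    "span (generators_perp s segs) = span {w, g}"
    using face_parallel_to_span_pair[OF assms] by metis
  have "dim (generators segs) = 3" using full by (simp add: aff_dim_zonotope_of)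
  moreover have "dim (generators_perp s segs) = 2"
    using s(2) dim_nonparallel_pair[OF assms(1)] by (metis dim_span)
  ultimately show "F facet_of zonotope_of segs"
    unfolding s(1) by (intro maximizers_facet_of_zonotope_of) simp
  show "direction F = span {w, g}"
    using s by (simp add: direction_maximizers_zonotope_of)
qed

lemma sum_card_faces_parallel_to_planes_through:
  assumes "w \<noteq> 0"
  shows "(\<Sum>\<pi>\<in>planes_through (generators segs) w. card (faces_parallel_to (zonotope_of segs) \<pi>)) =
    2 * card (planes_through (generators segs) w)"
proof -
  have "card (faces_parallel_to (zonotope_of segs) \<pi>) = 2"
    if "\<pi> \<in> planes_through (generators segs) w" for \<pi>
    using planes_throughE[OF that assms] card_faces_parallel_to_span_pair by metis
  then show ?thesis by simp
qed

lemma belt_subset_faces_parallel_to: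
  assumes dirE: "direction E = span {e}" and e: "e \<noteq> 0"
  shows "belt (zonotope_of segs) E \<subseteq>
    (\<Union>\<pi>\<in>planes_through (generators segs) e. faces_parallel_to (zonotope_of segs) \<pi>)"
proof
  fix F assume "F \<in> belt (zonotope_of segs) E"
  then obtain t where F: "F facet_of zonotope_of segs" and T: "((\<lambda>x. t + x) ` E) edge_of F"
    by (auto simp: belt_def)
  obtain c where c: "c \<noteq> 0" "F = maximizers c (zonotope_of segs)"
    "Suc (dim (generators_perp c segs)) = dim (generators segs)"
    using facet_of_zonotope_of[OF F] by blast
  have dim_perp: "dim (generators_perp c segs) = 2"
    using c(3) full by (simp add: aff_dim_zonotope_of)
  have "(\<lambda>x. t + x) ` E \<subseteq> F" using T by (auto simp: edge_of_def dest: face_of_imp_subset)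
  then have "span {e} \<subseteq> span (generators_perp c segs)"
    using direction_mono[of "(\<lambda>x. t + x) ` E" F] c(2)
    by (simp add: direction_translation dirE direction_maximizers_zonotope_of)
  moreover have "span (generators_perp c segs) \<subseteq> {x. c \<bullet> x = 0}"
    by (rule span_minimal) (auto simp: generators_perp_def subspace_hyperplane)
  ultimately have ce: "c \<bullet> e = 0" by (auto intro: span_base)
  obtain g where g: "g \<in> generators_perp c segs" "g \<notin> span {e}"
  proof (rule ccontr)
    assume "\<not> thesis"
    then have "generators_perp c segs \<subseteq> span {e}" using that by blast
    then have "span (generators_perp c segs) \<subseteq> span {e}" by (simp add: span_minimal)
    then have "dim (generators_perp c segs) \<le> 1"
      using dim_subset dim_singleton_nonzero[OF e] by (metis dim_span)
    then show False using dim_perp by simp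
  qed
  have "span {e, g} \<in> planes_through (generators segs) e"
    using g by (auto simp: planes_through_def generators_perp_def)
  moreover have "F \<in> faces_parallel_to (zonotope_of segs) (span {e, g})"
    using c(1,2) ce g(1) inner_eq_0_on_span_pair[of c e g]
    by (auto simp: faces_parallel_to_def generators_perp_def)
  ultimately show "F \<in> (\<Union>\<pi>\<in>planes_through (generators segs) e. faces_parallel_to (zonotope_of segs) \<pi>)"
    by blast
qed

lemma card_belt_le:
  assumes "E edge_of zonotope_of segs"
  obtains e where "e \<in> generators segs" "e \<noteq> 0" "direction E = span {e}"
    "card (belt (zonotope_of segs) E) \<le> 2 * card (planes_through (generators segs) e)"
proof -
  let ?Z = "zonotope_of segs"
  obtain cE where cE: "E = maximizers cE ?Z" "dim (generators_perp cE segs) = 1"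
    using edge_of_zonotope_of[OF assms] by blast
  obtain e where e: "e \<in> generators_perp cE segs" "e \<noteq> 0" "span (generators_perp cE segs) = span {e}"
    using obtain_nonzero_spanning[OF cE(2)] by blast
  have eG: "e \<in> generators segs" using e(1) by (simp add: generators_perp_def)
  have dirE: "direction E = span {e}" using cE(1) e(3) by (simp add: direction_maximizers_zonotope_of)
  let ?P = "planes_through (generators segs) e"
  have "card (belt ?Z E) \<le> card (\<Union>\<pi>\<in>?P. faces_parallel_to ?Z \<pi>)"
    using belt_subset_faces_parallel_to[OF dirE e(2)]
    by (intro card_mono)
      (auto simp: finite_planes_through finite_generators finite_faces_parallel_to_planes_through e(2))
  also have "\<dots> \<le> (\<Sum>\<pi>\<in>?P. card (faces_parallel_to ?Z \<pi>))"
    by (intro card_UN_le finite_planes_through finite_generators)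
  also have "\<dots> = 2 * card ?P"
    using sum_card_faces_parallel_to_planes_through[OF e(2)] .
  finally show ?thesis using eG e(2) dirE that by blast
qed

lemma faces_parallel_to_subset_belt:
  assumes wG: "w \<in> generators segs" and w0: "w \<noteq> 0"
    and c0: "\<And>h. h \<in> generators segs \<Longrightarrow> c0 \<bullet> h = 0 \<longleftrightarrow> h \<in> span {w}"
    and \<pi>: "\<pi> \<in> planes_through (generators segs) w"
  shows "faces_parallel_to (zonotope_of segs) \<pi> \<subseteq> belt (zonotope_of segs) (maximizers c0 (zonotope_of segs))"
proof
  fix F assume F: "F \<in> faces_parallel_to (zonotope_of segs) \<pi>"
  have F_facet: "F facet_of zonotope_of segs"
    using planes_throughE[OF \<pi> w0] face_parallel_to_span_pair_facet(1)[OF _ wG] F by metis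
  obtain c where c: "maximizers c (zonotope_of segs) \<subseteq> F"
    "\<And>h. h \<in> generators segs \<Longrightarrow> c \<bullet> h = 0 \<longleftrightarrow> h \<in> span {w}"
    using face_parallel_to_obtain_edge[OF wG w0 \<pi> F] by blast
  obtain t where t: "maximizers c (zonotope_of segs) = (\<lambda>x. t + x) ` maximizers c0 (zonotope_of segs)"
    using maximizers_zonotope_of_translation[of segs c c0] c(2) c0 by blast
  have "maximizers c (zonotope_of segs) face_of F"
    using face_of_subset[OF maximizers_face_of_zonotope_of c(1)] F_facet
    by (auto simp: facet_of_def dest: face_of_imp_subset)
  moreover have "aff_dim (maximizers c (zonotope_of segs)) = 1"
    using maximizers_edge_parallel_to(1)[OF wG w0 c(2)] by (simp only: edge_of_def)
  ultimately have "((\<lambda>x. t + x) ` maximizers c0 (zonotope_of segs)) edge_of F"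
    using t by (simp add: edge_of_def)
  then show "F \<in> belt (zonotope_of segs) (maximizers c0 (zonotope_of segs))"
    using F_facet by (auto simp: belt_def)
qed

lemma card_belt_ge:
  assumes wG: "w \<in> generators segs" and w0: "w \<noteq> 0"
    and planes: "planes_through (generators segs) w \<noteq> {}"
  obtains M where "M edge_of zonotope_of segs" "direction M = span {w}"
    "2 * card (planes_through (generators segs) w) \<le> card (belt (zonotope_of segs) M)"
proof -
  let ?Z = "zonotope_of segs"
  let ?P = "planes_through (generators segs) w"
  obtain \<pi>0 where \<pi>0: "\<pi>0 \<in> ?P" using planes by blast
  then have "card (faces_parallel_to ?Z \<pi>0) = 2"
    using planes_throughE[OF \<pi>0 w0] card_faces_parallel_to_span_pair by metis
  then obtain F0 where "F0 \<in> faces_parallel_to ?Z \<pi>0" by fastforce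
  then obtain c0 where c0: "\<And>h. h \<in> generators segs \<Longrightarrow> c0 \<bullet> h = 0 \<longleftrightarrow> h \<in> span {w}"
    using face_parallel_to_obtain_edge[OF wG w0 \<pi>0] by metis
  let ?M = "maximizers c0 ?Z"
  have "(\<Union>\<pi>\<in>?P. faces_parallel_to ?Z \<pi>) \<subseteq> belt ?Z ?M"
    using faces_parallel_to_subset_belt[OF wG w0 c0] by blast
  moreover have "finite (belt ?Z ?M)"
    by (rule finite_subset[OF _ finite_polytope_faces[OF polytope_zonotope_of]])
      (auto simp: belt_def facet_of_def)
  ultimately have "card (\<Union>\<pi>\<in>?P. faces_parallel_to ?Z \<pi>) \<le> card (belt ?Z ?M)"
    by (rule card_mono[rotated])
  moreover have "direction F = \<pi>" if \<pi>: "\<pi> \<in> ?P" and F: "F \<in> faces_parallel_to ?Z \<pi>" for \<pi> F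
  proof -
    obtain g where g: "\<pi> = span {w, g}" "g \<in> generators segs" "nonparallel w g"
      using planes_throughE[OF \<pi> w0] .
    show ?thesis using face_parallel_to_span_pair_facet(2)[OF g(3) wG g(2)] F g(1) by simp
  qed
  then have "faces_parallel_to ?Z \<pi> \<inter> faces_parallel_to ?Z \<pi>' = {}"
    if "\<pi> \<in> ?P" "\<pi>' \<in> ?P" "\<pi> \<noteq> \<pi>'" for \<pi> \<pi>'
    using that by blast
  then have "card (\<Union>\<pi>\<in>?P. faces_parallel_to ?Z \<pi>) = (\<Sum>\<pi>\<in>?P. card (faces_parallel_to ?Z \<pi>))"
    using finite_faces_parallel_to_planes_through[OF _ w0]
    by (intro card_UN_disjoint finite_planes_through finite_generators) auto
  ultimately show ?thesis
    using maximizers_edge_parallel_to[OF wG w0 c0] sum_card_faces_parallel_to_planes_through[OF w0] that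
    by auto
qed

end

lemma zonotope_of_filter:
  "zonotope_of segs = zonotope_of (filter P segs) + zonotope_of (filter (\<lambda>x. \<not> P x) segs)"
  by (induction segs) (auto simp: zonotope_of_def add_ac)

lemma generators_filter: "generators (filter P segs) = (\<lambda>(a, b). b - a) ` {ab \<in> set segs. P ab}"
  by (auto simp: generators_def)

lemma zonotope_of_closed_segment:
  assumes "\<And>g. g \<in> generators segs \<Longrightarrow> g \<in> span {e}"
  obtains p q where "zonotope_of segs = closed_segment p q"
proof -
  let ?S = "zonotope_of segs"
  obtain x0 where x0: "x0 \<in> ?S" using zonotope_of_nonempty by blast
  have dir: "direction ?S \<subseteq> span {e}"
    unfolding direction_zonotope_of by (rule span_minimal) (use assms in auto)
  have "\<exists>k. x = x0 + k *\<^sub>R e" if x: "x \<in> ?S" for x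
  proof -
    have "x - x0 \<in> direction ?S"
      unfolding direction_def using x x0 by (blast intro: span_base)
    then have "x - x0 \<in> span {e}" using dir by blast
    then obtain k where "x - x0 = k *\<^sub>R e" unfolding in_span_singleton_iff by blast
    then show ?thesis by (metis add.commute diff_add_cancel)
  qed
  then have "collinear ?S" unfolding collinear_alt by blast
  moreover have "compact ?S" "convex ?S"
    using polytope_zonotope_of polytope_imp_compact polytope_imp_convex by blast+
  ultimately show ?thesis
    using compact_convex_collinear_segment zonotope_of_nonempty that by metis
qed

lemma prism_zonotope_of:
  assumes ab: "nonparallel a b" and G: "a \<in> generators segs" "b \<in> generators segs" "e \<in> generators segs"
    and e: "e \<notin> span {a, b}"
    and plane_and_line: "\<And>u. u \<in> generators segs \<Longrightarrow> u \<in> span {a, b} \<or> u \<in> span {e}"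
  shows "prism (zonotope_of segs)"
proof -
  define in_plane where "in_plane ab \<longleftrightarrow> snd ab - fst ab \<in> span {a, b}" for ab
  define s1 where "s1 = filter in_plane segs"
  define s2 where "s2 = filter (\<lambda>x. \<not> in_plane x) segs"
  have gens1: "generators s1 = {g \<in> generators segs. g \<in> span {a, b}}"
    unfolding s1_def generators_filter in_plane_def by (auto simp: generators_def)
  have gens2: "generators s2 = {g \<in> generators segs. g \<notin> span {a, b}}"
    unfolding s2_def generators_filter in_plane_def by (auto simp: generators_def)
  have "span (generators s1) = span {a, b}"
    using G gens1 unfolding span_eq by (auto intro: span_base)
  then have Q: "aff_dim (zonotope_of s1) = 2" "direction (zonotope_of s1) = span {a, b}"
    using dim_nonparallel_pair[OF ab]
    by (simp_all add: aff_dim_zonotope_of direction_zonotope_of) (metis dim_span)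
  obtain p q where pq: "zonotope_of s2 = closed_segment p q"
    using zonotope_of_closed_segment[of s2 e] plane_and_line gens2 by blast
  have dir2: "span {q - p} = span (generators s2)"
    using direction_zonotope_of[of s2] by (simp add: pq direction_closed_segment)
  have "e \<in> span {q - p}" using dir2 G(3) e gens2 by (auto intro: span_base)
  then obtain k where k: "e = k *\<^sub>R (q - p)" by (auto simp: in_span_singleton_iff)
  have "q - p \<notin> span {a, b}"
    using e k span_scale[of "q - p" "{a, b}" k] by auto
  moreover have "p \<noteq> q" using calculation span_zero[of "{a, b}"] by auto
  moreover have "zonotope_of segs = zonotope_of s1 + zonotope_of s2"
    unfolding s1_def s2_def by (rule zonotope_of_filter)
  then have "zonotope_of segs = {x + y |x y. x \<in> zonotope_of s1 \<and> y \<in> closed_segment p q}"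
    unfolding pq by (auto simp: set_plus_def)
  ultimately show ?thesis
    unfolding prism_def using polytope_zonotope_of[of s1] Q by blast
qed

theorem lemma4p5:
  fixes P E :: "(real^3) set"
  assumes "zonotope P"
    and "aff_dim P = 3"
    and "\<not> prism P"
    and "E edge_of P"
    and "card (belt P E) = 8"
  shows "\<exists>M. M edge_of P \<and> direction M \<noteq> direction E \<and> card (belt P M) \<ge> 8"
proof -
  obtain segs where P: "P = zonotope_of segs" using assms(1) by (auto simp: zonotope_iff_zonotope_of)
  note full = assms(2)[unfolded P]
  obtain e where e: "e \<in> generators segs" "e \<noteq> 0" "direction E = span {e}"
    "card (belt P E) \<le> 2 * card (planes_through (generators segs) e)"
    using card_belt_le[OF full] assms(4) P by blast
  have "\<exists>u\<in>generators segs. u \<notin> span {a, b} \<and> u \<notin> span {e}"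
    if "a \<in> generators segs" "b \<in> generators segs" "nonparallel a b" "e \<notin> span {a, b}" for a b
    using prism_zonotope_of[OF that(3,1,2) e(1) that(4)] assms(3) P by blast
  then obtain w where w: "w \<in> generators segs" "w \<notin> span {e}"
    "4 \<le> card (planes_through (generators segs) w)"
    using exists_nonparallel_with_four_planes[OF finite_generators e(1,2)] e(4) assms(5) by fastforce
  have "w \<noteq> 0" "planes_through (generators segs) w \<noteq> {}"
    using w(2,3) span_zero by auto
  then obtain M where M: "M edge_of P" "direction M = span {w}"
    "2 * card (planes_through (generators segs) w) \<le> card (belt P M)"
    using card_belt_ge[OF full w(1)] P by blast
  have "direction M \<noteq> direction E" using M(2) e(3) w(2) by (auto intro: span_base)
  then show ?thesis using M w(3) by auto
qed

end
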